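(* Let $n \geq 1$ and consider sites $v_1,\ldots,v_n$ with uplink capacities $C_u(v_k)>0$ and downlink capacities $C_d(v_k)>0$, and client data streams $s_1,\ldots,s_n$ with rates $R_1,\ldots,R_n>0$ that are sustainable, i.e. (1) $R_i \leq C_u(v_i)$ for every $i$; (2) $\sum_{j\neq i} R_j \leq C_d(v_i)$ for every $i$; (3) $(n-1)\sum_{i=1}^n R_i \leq \sum_{i=1}^n C_u(v_i)$. Then there exists a partitioning scheme for each client data stream, i.e. nonnegative reals $r_{i,j}$ ($1\le i,j\le n$) with $\sum_{j=1}^n r_{i,j}=R_i$ for every $i$, together with, for every pair $(i,j)$, a broadcast tree $T_{i,j}$ for the sub-stream $s_{i,j}$ (a rooted spanning tree on $\{v_1,\ldots,v_n\}$ with root $v_i$), such that: (a) each sub-stream can be broadcast at its rate without violating downlink and uplink bandwidth constraints at any site, i.e. for every $k$, $$\sum_{i=1}^n\sum_{j=1}^n r_{i,j}\, c_{T_{i,j}}(v_k) \leq C_u(v_k) \quad\text{and}\quad \sum_{i\neq k}\sum_{j=1}^n r_{i,j} \leq C_d(v_k),$$ where $c_T(u)$ denotes the number of children of $u$ in the rooted tree $T$; (b) the height of each tree $T_{i,j}$ is at most $2$.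
   Context: Network model: $n$ sites $v_1,\ldots,v_n$ are pairwise connected through a congestion-free core (complete graph); each site $v$ has an uplink bandwidth $C_u(v)>0$ and a downlink bandwidth $C_d(v)>0$. A unicast transmission at rate $r$ from one site to another consumes $r$ of the sender's uplink bandwidth and $r$ of the receiver's downlink bandwidth; these are shared among all transmissions involving the site. Site $v_i$ has a client data stream $s_i$ of rate $R_i$ that must be received by all other sites; the client stream arriving at $v_i$ does not consume $v_i$'s downlink bandwidth. Rates can be split at any granularity: a partitioning scheme splits $s_i$ into $n$ sub-streams $s_{i,1},\ldots,s_{i,n}$ with rates $r_{i,1},\ldots,r_{i,n}$ summing to $R_i$. A sub-stream of $s_i$ is broadcast along a rooted spanning tree rooted at $v_i$: each node forwards the sub-stream to each of its children at the sub-stream's rate, so a node with $c$ children uses $c$ times the rate of its uplink, and each non-root node uses the rate of its downlink. The height of a rooted tree is the maximum number of edges on a path from the root to a leaf. *)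

theory Defs
  imports Complex_Main
begin

text \<open>Sites are indexed 0..<n. A rooted spanning tree on the sites with root r is
given by a parent function p: every non-root site v < n has parent p v < n, and
following parents from v eventually reaches the root (so there are no cycles).
Tree edges are (p v, v) for v < n, v \<noteq> r; the value p r is irrelevant.\<close>

definition is_rooted_spanning_tree :: "nat \<Rightarrow> nat \<Rightarrow> (nat \<Rightarrow> nat) \<Rightarrow> bool" where
  "is_rooted_spanning_tree n r p \<longleftrightarrow>
     r < n \<and> (\<forall>v<n. v \<noteq> r \<longrightarrow> p v < n \<and> (\<exists>k. (p ^^ k) v = r))"

definition tree_depth :: "nat \<Rightarrow> (nat \<Rightarrow> nat) \<Rightarrow> nat \<Rightarrow> nat" where
  "tree_depth r p v = (LEAST k. (p ^^ k) v = r)"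

definition tree_height :: "nat \<Rightarrow> nat \<Rightarrow> (nat \<Rightarrow> nat) \<Rightarrow> nat" where
  "tree_height n r p = Max (tree_depth r p ` {..<n})"

definition num_children :: "nat \<Rightarrow> nat \<Rightarrow> (nat \<Rightarrow> nat) \<Rightarrow> nat \<Rightarrow> nat" where
  "num_children n r p u = card {v. v < n \<and> v \<noteq> r \<and> p v = u}"

end

theory Submission
  imports Defs
begin

text \<open>Split every stream s i in the same proportions w j and send the
sub-stream s(i,j) from v i to the relay v j, which forwards it to
all other sites. Site v k then uploads its own stream once plus (n - 2) w k
times the total rate, so it suffices to choose w k proportional to the spare
uplink capacity Cu k - R k; condition (3) says exactly that the total spare
capacity covers (n - 2) times the total rate.\<close>

definition two_hop_tree :: "nat \<Rightarrow> nat \<Rightarrow> nat \<Rightarrow> nat" where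
  "two_hop_tree i j = (\<lambda>v. if v = j \<or> v = i then i else j)"

lemma two_hop_tree_twice: "(two_hop_tree i j ^^ 2) v = i"
  by (simp add: two_hop_tree_def numeral_2_eq_2)

lemma two_hop_tree_spanning:
  assumes "i < n" "j < n"
  shows "is_rooted_spanning_tree n i (two_hop_tree i j)"
  unfolding is_rooted_spanning_tree_def
  using assms two_hop_tree_twice by (auto simp: two_hop_tree_def)

lemma tree_height_two_hop_tree:
  assumes "i < n"
  shows "tree_height n i (two_hop_tree i j) \<le> 2"
proof -
  have "tree_depth i (two_hop_tree i j) v \<le> 2" for v
    unfolding tree_depth_def by (rule Least_le) (rule two_hop_tree_twice)
  then show ?thesis
    unfolding tree_height_def using assms by (subst Max_le_iff) auto
qed

text \<open>The root has the single child j (unless j = i, when it has all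
n - 1 others), and j has the remaining n - 2 sites.\<close>

lemma num_children_two_hop_tree:
  assumes "i < n" "j < n" "k < n"
  shows "real (num_children n i (two_hop_tree i j) k) =
           of_bool (k = i) + of_bool (k = j) * (real n - 2)"
proof -
  let ?C = "{v. v < n \<and> v \<noteq> i \<and> two_hop_tree i j v = k}"
  consider "k = i" "j = i" | "k = i" "j \<noteq> i" | "k = j" "j \<noteq> i" | "k \<noteq> i" "k \<noteq> j"
    by blast
  then show ?thesis
  proof cases
    case 1
    then have "?C = {..<n} - {i}" by (auto simp: two_hop_tree_def)
    with 1 assms show ?thesis by (simp add: num_children_def of_nat_diff)
  next
    case 2
    then have "?C = {j}" using assms by (auto simp: two_hop_tree_def)
    with 2 show ?thesis by (simp add: num_children_def)
  next
    case 3
    then have "?C = {..<n} - {i, j}" by (auto simp: two_hop_tree_def)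
    moreover have "card ({..<n} - {i, j}) = n - 2"
      using 3 assms by (simp add: card_Diff_subset)
    moreover have "n \<ge> 2" using 3 assms by linarith
    ultimately show ?thesis using 3 by (simp add: num_children_def of_nat_diff)
  next
    case 4
    then have "?C = {}" by (auto simp: two_hop_tree_def)
    with 4 show ?thesis by (simp add: num_children_def)
  qed
qed

lemma uplink_load_two_hop_trees:
  fixes r :: "nat \<Rightarrow> nat \<Rightarrow> real"
  assumes "k < n"
  shows "(\<Sum>i<n. \<Sum>j<n. r i j * real (num_children n i (two_hop_tree i j) k)) =
           (\<Sum>j<n. r k j) + (real n - 2) * (\<Sum>i<n. r i k)"
proof -
  have "(\<Sum>i<n. \<Sum>j<n. r i j * real (num_children n i (two_hop_tree i j) k)) =
        (\<Sum>i<n. \<Sum>j<n. of_bool (k = i) * r i j + (real n - 2) * (of_bool (k = j) * r i j))"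
    by (intro sum.cong refl) (simp add: num_children_two_hop_tree assms algebra_simps)
  also have "\<dots> = (\<Sum>i<n. \<Sum>j<n. of_bool (k = i) * r i j)
                  + (real n - 2) * (\<Sum>i<n. \<Sum>j<n. of_bool (k = j) * r i j)"
    by (simp only: sum.distrib sum_distrib_left)
  also have "(\<Sum>i<n. \<Sum>j<n. of_bool (k = i) * r i j) = (\<Sum>j<n. r k j)"
    using assms by (simp add: sum_distrib_left[symmetric] sum.delta)
  also have "(\<Sum>i<n. \<Sum>j<n. of_bool (k = j) * r i j) = (\<Sum>i<n. r i k)"
    using assms by (simp add: sum.delta)
  finally show ?thesis .
qed

lemma relay_weights_exist:
  fixes Cu R :: "nat \<Rightarrow> real"
  assumes "n \<ge> 1"
    and own: "\<forall>k<n. R k \<le> Cu k"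
    and total: "(real n - 1) * (\<Sum>i<n. R i) \<le> (\<Sum>i<n. Cu i)"
  shows "\<exists>w. (\<forall>k<n. w k \<ge> 0) \<and> (\<Sum>k<n. w k) = 1 \<and>
             (\<forall>k<n. (real n - 2) * (\<Sum>i<n. R i) * w k \<le> Cu k - R k)"
proof -
  define D where "D = (\<Sum>k<n. Cu k - R k)"
  have spare: "(real n - 2) * (\<Sum>i<n. R i) \<le> D"
    using total by (simp add: D_def sum_subtractf algebra_simps)
  show ?thesis
  proof (cases "D > 0")
    case True
    show ?thesis
    proof (intro exI[of _ "\<lambda>k. (Cu k - R k) / D"] conjI allI impI)
      show "(\<Sum>k<n. (Cu k - R k) / D) = 1"
        using True by (simp add: D_def sum_divide_distrib[symmetric])
    next
      fix k assume k: "k < n"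
      then show "(Cu k - R k) / D \<ge> 0" using own True by simp
      have "(real n - 2) * (\<Sum>i<n. R i) * ((Cu k - R k) / D) \<le> D * ((Cu k - R k) / D)"
        using spare own k True by (intro mult_right_mono) auto
      then show "(real n - 2) * (\<Sum>i<n. R i) * ((Cu k - R k) / D) \<le> Cu k - R k"
        using True by simp
    qed
  next
    case False
    show ?thesis
    proof (intro exI[of _ "\<lambda>k. of_bool (k = 0)"] conjI allI impI)
      show "(\<Sum>k<n. of_bool (k = 0) :: real) = 1" using \<open>n \<ge> 1\<close> by (simp add: sum.delta)
    next
      fix k assume "k < n"
      then show "(real n - 2) * (\<Sum>i<n. R i) * of_bool (k = 0) \<le> Cu k - R k"
        using spare False own by auto
    qed simp
  qed
qed

theorem theorem3p1:
  fixes n :: nat and Cu Cd R :: "nat \<Rightarrow> real"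
  assumes "n \<ge> 1"
    and "\<forall>k<n. Cu k > 0" and "\<forall>k<n. Cd k > 0" and "\<forall>i<n. R i > 0"
    and "\<forall>i<n. R i \<le> Cu i"
    and "\<forall>i<n. (\<Sum>j\<in>{..<n} - {i}. R j) \<le> Cd i"
    and "(real n - 1) * (\<Sum>i<n. R i) \<le> (\<Sum>i<n. Cu i)"
  shows "\<exists>(r :: nat \<Rightarrow> nat \<Rightarrow> real) (T :: nat \<Rightarrow> nat \<Rightarrow> nat \<Rightarrow> nat).
           (\<forall>i<n. \<forall>j<n. r i j \<ge> 0) \<and>
           (\<forall>i<n. (\<Sum>j<n. r i j) = R i) \<and>
           (\<forall>i<n. \<forall>j<n. is_rooted_spanning_tree n i (T i j) \<and> tree_height n i (T i j) \<le> 2) \<and>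
           (\<forall>k<n. (\<Sum>i<n. \<Sum>j<n. r i j * real (num_children n i (T i j) k)) \<le> Cu k) \<and>
           (\<forall>k<n. (\<Sum>i\<in>{..<n} - {k}. \<Sum>j<n. r i j) \<le> Cd k)"
proof -
  obtain w where w_nonneg: "\<forall>k<n. w k \<ge> 0" and w_sum: "(\<Sum>k<n. w k) = 1"
    and w_fits: "\<forall>k<n. (real n - 2) * (\<Sum>i<n. R i) * w k \<le> Cu k - R k"
    using relay_weights_exist[OF assms(1,5,7)] by blast
  define r where "r i j = R i * w j" for i j
  have row_sum: "(\<Sum>j<n. r i j) = R i" for i
    by (simp add: r_def sum_distrib_left[symmetric] w_sum)
  have uplink: "(\<Sum>i<n. \<Sum>j<n. r i j * real (num_children n i (two_hop_tree i j) k)) \<le> Cu k"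
    if k: "k < n" for k
  proof -
    have "(\<Sum>i<n. r i k) = (\<Sum>i<n. R i) * w k"
      by (simp add: r_def sum_distrib_right)
    then have "(\<Sum>i<n. \<Sum>j<n. r i j * real (num_children n i (two_hop_tree i j) k))
                 = R k + (real n - 2) * (\<Sum>i<n. R i) * w k"
      using k by (simp add: uplink_load_two_hop_trees row_sum)
    with w_fits k show ?thesis by fastforce
  qed
  show ?thesis
    using assms(4,6) w_nonneg row_sum uplink
    by (intro exI[of _ r] exI[of _ two_hop_tree])
       (auto simp: r_def two_hop_tree_spanning tree_height_two_hop_tree)
qed

end
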